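(* Let $M\ge2$, let $\bm{\mu}_1,\dots,\bm{\mu}_M\in\mathbb{R}^d$, and let $\epsilon>0$. Let $C_k(\mathbf{x})$ denote either the GLRT cost $\|g_\epsilon(\mathbf{x}-\bm{\mu}_k)\|_2^2$ for all $k$, or the minimum-distance cost $\|\mathbf{x}-\bm{\mu}_k\|_2^2$ for all $k$. Fix a true class $i$ and a noise realization $\mathbf{n}\in\mathbb{R}^d$. For $j\ne i$, let $\mathbf{e}_{ij}=-\epsilon\,\mathrm{sign}(\bm{\mu}_i-\bm{\mu}_j)$. Then the following are equivalent: (1) there exist $\mathbf{e}$ with $\|\mathbf{e}\|_\infty\le\epsilon$ and $j\ne i$ such that $C_j(\bm{\mu}_i+\mathbf{e}+\mathbf{n})<C_i(\bm{\mu}_i+\mathbf{e}+\mathbf{n})$; (2) there exists $j\ne i$ such that $C_j(\bm{\mu}_i+\mathbf{e}_{ij}+\mathbf{n})<C_i(\bm{\mu}_i+\mathbf{e}_{ij}+\mathbf{n})$.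
   Context: For $\epsilon>0$, $g_\epsilon(x)=\mathrm{sign}(x)\max(0,|x|-\epsilon)$ with $\mathrm{sign}(0)=0$, applied coordinate-wise; $\mathrm{sign}$ of a vector is also taken coordinate-wise. *)

theory Defs
  imports "HOL-Analysis.Analysis"
begin

definition soft_thresh :: "real \<Rightarrow> real ^ 'd \<Rightarrow> real ^ 'd" where
  "soft_thresh eps x = (\<chi> l. sgn (x $ l) * max 0 (\<bar>x $ l\<bar> - eps))"

definition vsgn :: "real ^ 'd \<Rightarrow> real ^ 'd" where
  "vsgn x = (\<chi> l. sgn (x $ l))"

definition glrt_cost :: "real \<Rightarrow> (nat \<Rightarrow> real ^ 'd) \<Rightarrow> nat \<Rightarrow> real ^ 'd \<Rightarrow> real" where
  "glrt_cost eps mu k x = (norm (soft_thresh eps (x - mu k)))\<^sup>2"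

definition md_cost :: "(nat \<Rightarrow> real ^ 'd) \<Rightarrow> nat \<Rightarrow> real ^ 'd \<Rightarrow> real" where
  "md_cost mu k x = (norm (x - mu k))\<^sup>2"

end

theory Submission
  imports Defs
begin

text \<open>Both costs are sums over the coordinates of a one-dimensional penalty \<open>h\<close>,
  \<open>h t = t\<^sup>2\<close> or \<open>h t = (max 0 (\<bar>t\<bar> - \<epsilon>))\<^sup>2\<close>, and both penalties have increasing increments:
  \<open>h (u + d) - h u\<close> grows with \<open>u\<close> for \<open>d \<ge> 0\<close>. In coordinate \<open>l\<close>, the contribution of a
  perturbation \<open>e\<close> to \<open>C\<^sub>j - C\<^sub>i\<close> is \<open>h (s + d) - h s\<close> with \<open>s = e\<^sub>l + n\<^sub>l\<close> and
  \<open>d = \<mu>\<^sub>i\<^sub>l - \<mu>\<^sub>j\<^sub>l\<close>, which is monotone in \<open>e\<^sub>l\<close> in the direction of \<open>sgn d\<close>. Hence the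
  perturbation \<open>-\<epsilon> sgn (\<mu>\<^sub>i - \<mu>\<^sub>j)\<close> minimises \<open>C\<^sub>j - C\<^sub>i\<close> over the \<open>\<epsilon>\<close>-box, coordinate by
  coordinate.\<close>

definition increasing_increments :: "(real \<Rightarrow> real) \<Rightarrow> bool" where
  "increasing_increments h \<longleftrightarrow>
     (\<forall>u v d. u \<le> v \<longrightarrow> 0 \<le> d \<longrightarrow> h (u + d) - h u \<le> h (v + d) - h v)"

lemma increasing_incrementsD:
  "increasing_increments h \<Longrightarrow> u \<le> v \<Longrightarrow> 0 \<le> d \<Longrightarrow> h (u + d) - h u \<le> h (v + d) - h v"
  unfolding increasing_increments_def by blast

lemma increasing_increments_add:
  assumes "increasing_increments f" "increasing_increments g"
  shows "increasing_increments (\<lambda>t. f t + g t)"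
  unfolding increasing_increments_def
proof (intro allI impI)
  fix u v d :: real
  assume "u \<le> v" "0 \<le> d"
  then show "f (u + d) + g (u + d) - (f u + g u) \<le> f (v + d) + g (v + d) - (f v + g v)"
    using increasing_incrementsD[OF assms(1), of u v d] increasing_incrementsD[OF assms(2), of u v d]
    by linarith
qed

lemma increasing_increments_shift:
  assumes "increasing_increments h"
  shows "increasing_increments (\<lambda>t. h (t + c))"
  unfolding increasing_increments_def
proof (intro allI impI)
  fix u v d :: real
  assume "u \<le> v" "0 \<le> d"
  then show "h (u + d + c) - h (u + c) \<le> h (v + d + c) - h (v + c)"
    using increasing_incrementsD[OF assms, of "u + c" "v + c" d] by (simp add: algebra_simps)
qed

lemma increasing_increments_reflect:
  assumes "increasing_increments h"
  shows "increasing_increments (\<lambda>t. h (- t))"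
  unfolding increasing_increments_def
proof (intro allI impI)
  fix u v d :: real
  assume "u \<le> v" "0 \<le> d"
  then show "h (- (u + d)) - h (- u) \<le> h (- (v + d)) - h (- v)"
    using increasing_incrementsD[OF assms, of "- (v + d)" "- (u + d)" d] by (simp add: algebra_simps)
qed

lemma increasing_increments_power2: "increasing_increments (\<lambda>t. t\<^sup>2)"
  unfolding increasing_increments_def
proof (intro allI impI)
  fix u v d :: real
  assume "u \<le> v" "0 \<le> d"
  then have "d * (2 * u + d) \<le> d * (2 * v + d)"
    by (intro mult_left_mono) auto
  then show "(u + d)\<^sup>2 - u\<^sup>2 \<le> (v + d)\<^sup>2 - v\<^sup>2"
    by (simp add: power2_eq_square algebra_simps)
qed

lemma increasing_increments_pos_part_power2: "increasing_increments (\<lambda>t. (max 0 t)\<^sup>2)"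
  unfolding increasing_increments_def
proof (intro allI impI)
  fix u v d :: real
  assume "u \<le> v" "0 \<le> d"
  \<comment> \<open>both factors are nonnegative and nondecreasing in \<open>t\<close>\<close>
  have factor: "(max 0 (t + d))\<^sup>2 - (max 0 t)\<^sup>2 = (max 0 (t + d) - max 0 t) * (max 0 (t + d) + max 0 t)"
    for t :: real
    by (simp add: power2_eq_square algebra_simps)
  have "(max 0 (u + d) - max 0 u) * (max 0 (u + d) + max 0 u)
      \<le> (max 0 (v + d) - max 0 v) * (max 0 (v + d) + max 0 v)"
    using \<open>u \<le> v\<close> \<open>0 \<le> d\<close> by (intro mult_mono) auto
  then show "(max 0 (u + d))\<^sup>2 - (max 0 u)\<^sup>2 \<le> (max 0 (v + d))\<^sup>2 - (max 0 v)\<^sup>2"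
    by (simp only: factor)
qed

lemma soft_thresh_component_power2:
  fixes eps t :: real
  assumes "0 \<le> eps"
  shows "(sgn t * max 0 (\<bar>t\<bar> - eps))\<^sup>2 = (max 0 (t - eps))\<^sup>2 + (max 0 (- t - eps))\<^sup>2"
  using assms by (cases t "0::real" rule: linorder_cases) (auto simp: max_def)

lemma increasing_increments_soft_thresh_power2:
  "increasing_increments (\<lambda>t. (max 0 (t - eps))\<^sup>2 + (max 0 (- t - eps))\<^sup>2)"
proof -
  have shifted: "increasing_increments (\<lambda>t. (max 0 (t + - eps))\<^sup>2)"
    by (rule increasing_increments_shift[OF increasing_increments_pos_part_power2])
  then have "increasing_increments (\<lambda>t. (max 0 (- t + - eps))\<^sup>2)"
    by (rule increasing_increments_reflect)
  with shifted show ?thesis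
    using increasing_increments_add by fastforce
qed

definition separable_cost :: "(real \<Rightarrow> real) \<Rightarrow> real ^ 'd \<Rightarrow> real ^ 'd \<Rightarrow> real" where
  "separable_cost h c x = (\<Sum>l\<in>UNIV. h (x $ l - c $ l))"

lemma power2_norm_vec_eq_sum: "(norm (y :: real ^ 'd))\<^sup>2 = (\<Sum>l\<in>UNIV. (y $ l)\<^sup>2)"
  unfolding power2_norm_eq_inner inner_vec_def by (simp add: power2_eq_square)

lemma md_cost_eq_separable_cost: "md_cost mu k = separable_cost (\<lambda>t. t\<^sup>2) (mu k)"
  by (simp add: fun_eq_iff md_cost_def separable_cost_def power2_norm_vec_eq_sum)

lemma glrt_cost_eq_separable_cost:
  assumes "0 \<le> eps"
  shows "glrt_cost eps mu k =
    separable_cost (\<lambda>t. (max 0 (t - eps))\<^sup>2 + (max 0 (- t - eps))\<^sup>2) (mu k)"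
  by (simp add: fun_eq_iff glrt_cost_def separable_cost_def power2_norm_vec_eq_sum
      soft_thresh_def soft_thresh_component_power2 assms)

lemma sign_perturbation_minimises_increment:
  fixes h :: "real \<Rightarrow> real"
  assumes h: "increasing_increments h" and e: "\<bar>e\<bar> \<le> eps"
  shows "h (s - eps * sgn d + d) - h (s - eps * sgn d) \<le> h (s + e + d) - h (s + e)"
proof (cases d "0::real" rule: linorder_cases)
  case less
  have "h (s + e + d - d) - h (s + e + d) \<le> h (s + eps + d - d) - h (s + eps + d)"
    using increasing_incrementsD[OF h, of "s + e + d" "s + eps + d" "- d"] e less by simp
  then show ?thesis
    using less by (simp add: algebra_simps)
next
  case greater
  then show ?thesis
    using increasing_incrementsD[OF h, of "s - eps" "s + e" d] e by simp
qed simp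

lemma separable_cost_diff_eq_sum:
  "separable_cost h b (a + f + n) - separable_cost h a (a + f + n) =
     (\<Sum>l\<in>UNIV. h (n $ l + f $ l + (a $ l - b $ l)) - h (n $ l + f $ l))"
  unfolding separable_cost_def sum_subtractf[symmetric]
  by (intro sum.cong refl) (simp add: algebra_simps)

lemma separable_cost_sign_perturbation_worst:
  fixes a b n e :: "real ^ 'd"
  assumes h: "increasing_increments h" and e: "infnorm e \<le> eps"
  defines "e' \<equiv> (- eps) *\<^sub>R vsgn (a - b)"
  shows "separable_cost h b (a + e' + n) - separable_cost h a (a + e' + n)
    \<le> separable_cost h b (a + e + n) - separable_cost h a (a + e + n)"
  unfolding separable_cost_diff_eq_sum
proof (rule sum_mono)
  fix l
  have "\<bar>e $ l\<bar> \<le> eps"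
    using e component_le_infnorm_cart[of e l] by linarith
  then show "h (n $ l + e' $ l + (a $ l - b $ l)) - h (n $ l + e' $ l)
      \<le> h (n $ l + e $ l + (a $ l - b $ l)) - h (n $ l + e $ l)"
    using sign_perturbation_minimises_increment[OF h, of "e $ l" eps "n $ l" "a $ l - b $ l"]
    by (simp add: e'_def vsgn_def)
qed

lemma infnorm_scaleR_vsgn_le:
  fixes x :: "real ^ 'd"
  assumes "0 \<le> eps"
  shows "infnorm ((- eps) *\<^sub>R vsgn x) \<le> eps"
  unfolding infnorm_cart
  using assms by (intro cSup_least) (auto simp: vsgn_def sgn_if abs_mult)

theorem mainTheorem9:
  fixes M :: nat and mu :: "nat \<Rightarrow> real ^ 'd" and eps :: real
    and C :: "nat \<Rightarrow> real ^ 'd \<Rightarrow> real" and i :: nat and n :: "real ^ 'd"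
  assumes "M \<ge> 2" and "eps > 0"
    and "C = glrt_cost eps mu \<or> C = md_cost mu"
    and "i \<in> {1..M}"
  shows "(\<exists>e j. infnorm e \<le> eps \<and> j \<in> {1..M} \<and> j \<noteq> i \<and>
            C j (mu i + e + n) < C i (mu i + e + n))
     \<longleftrightarrow>
         (\<exists>j \<in> {1..M}. j \<noteq> i \<and>
            C j (mu i + (- eps) *\<^sub>R vsgn (mu i - mu j) + n)
              < C i (mu i + (- eps) *\<^sub>R vsgn (mu i - mu j) + n))"
proof -
  obtain h where h: "increasing_increments h" and C: "\<And>k. C k = separable_cost h (mu k)"
  proof (cases "C = glrt_cost eps mu")
    case True
    then show thesis
      using that[OF increasing_increments_soft_thresh_power2] assms(2)
      by (simp add: glrt_cost_eq_separable_cost)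
  next
    case False
    then show thesis
      using that[OF increasing_increments_power2] assms(3)
      by (simp add: md_cost_eq_separable_cost)
  qed
  have "C j (mu i + (- eps) *\<^sub>R vsgn (mu i - mu j) + n)
          < C i (mu i + (- eps) *\<^sub>R vsgn (mu i - mu j) + n)"
    if "infnorm e \<le> eps" "C j (mu i + e + n) < C i (mu i + e + n)" for e j
    using separable_cost_sign_perturbation_worst[OF h that(1), where a = "mu i" and b = "mu j" and n = n] that(2)
    unfolding C by linarith
  moreover have "infnorm ((- eps) *\<^sub>R vsgn (mu i - mu j)) \<le> eps" for j
    using infnorm_scaleR_vsgn_le assms(2) less_imp_le by blast
  ultimately show ?thesis
    by blast
qed

end
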